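(* Let $X$ be a topological space, let $Y$ be a Urysohn space, let $S$ be a dense subset of $X$ and let $f:S\to Y$ be continuous. Then the following are equivalent: (1) $f$ has a continuous extension to $X$; (2) for every open set $V$ of $Y$ the set $X_{\theta}(f^{-1}(V))$ is open in $X$, and for every family $\{A_\beta\}$ of closed subsets of $Y$ with $\bigcap_\beta A_\beta=\emptyset$ one has $\bigcap_\beta\overline{f^{-1}(A_\beta)}=\emptyset$ (closures in $X$).
   Context: A Urysohn space is one in which any two distinct points have open neighborhoods with disjoint closures. $\mathcal N(x)$ is the set of open neighborhoods of $x$ in $X$. For $M\subseteq Y$, the $\theta$-closure $\mathrm{cl}_\theta M$ is the set of $y\in Y$ such that $\mathrm{cl}\,U\cap M\neq\emptyset$ for every open $U\ni y$. For $V\subseteq Y$, $X_\theta(f^{-1}(V))$ is the set of points $x\in X$ with $\bigcap\{\mathrm{cl}_\theta f(P\cap S):P\in\mathcal N(x)\}\subseteq V$. *)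

theory Defs
  imports "HOL-Analysis.Analysis"
begin

definition Urysohn_space :: "'a topology \<Rightarrow> bool" where
  "Urysohn_space Y \<longleftrightarrow>
     (\<forall>x\<in>topspace Y. \<forall>y\<in>topspace Y. x \<noteq> y \<longrightarrow>
        (\<exists>U V. openin Y U \<and> openin Y V \<and> x \<in> U \<and> y \<in> V \<and>
               Y closure_of U \<inter> Y closure_of V = {}))"

definition theta_closure :: "'a topology \<Rightarrow> 'a set \<Rightarrow> 'a set" where
  "theta_closure Y M =
     {y \<in> topspace Y. \<forall>U. openin Y U \<and> y \<in> U \<longrightarrow> Y closure_of U \<inter> M \<noteq> {}}"

text \<open>X_theta(f^{-1}(V)) for f defined on S.\<close>
definition X_theta :: "'a topology \<Rightarrow> 'b topology \<Rightarrow> 'a set \<Rightarrow> ('a \<Rightarrow> 'b) \<Rightarrow> 'b set \<Rightarrow> 'a set" where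
  "X_theta X Y S f V =
     {x \<in> topspace X.
        \<Inter>{theta_closure Y (f ` (P \<inter> S)) | P. openin X P \<and> x \<in> P} \<subseteq> V}"

end

theory Submission
  imports Defs
begin

text \<open>Attach to each point x of X its theta-cluster set, the intersection of the
  theta-closures of f(P \<inter> S) over the open neighbourhoods P of x; then X_theta(f^-1(V)) is
  the set of points whose cluster set lies in V. The condition on closed families, applied to
  the closures of two neighbourhoods that separate distinct points in the Urysohn space Y,
  shows that a cluster set has at most one point; applied to the closures of the sets
  f(P \<inter> S), it shows that the cluster set is nonempty, since theta-closures contain closures.
  The extension g sends x to the unique point of its cluster set, and
  g^-1(V) = X_theta(f^-1(V)) makes it continuous. Conversely, a continuous extension g
  satisfies the condition on closed families and g x lies in the cluster set of x, which is
  therefore {g x}.\<close>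

definition theta_cluster :: "'a topology \<Rightarrow> 'b topology \<Rightarrow> 'a set \<Rightarrow> ('a \<Rightarrow> 'b) \<Rightarrow> 'a \<Rightarrow> 'b set"
  where "theta_cluster X Y S f x = \<Inter>{theta_closure Y (f ` (P \<inter> S)) | P. openin X P \<and> x \<in> P}"

definition closed_family_condition :: "'a topology \<Rightarrow> 'b topology \<Rightarrow> 'a set \<Rightarrow> ('a \<Rightarrow> 'b) \<Rightarrow> bool"
  where "closed_family_condition X Y S f \<longleftrightarrow>
    (\<forall>\<A>. (\<forall>A\<in>\<A>. closedin Y A) \<and> topspace Y \<inter> \<Inter>\<A> = {} \<longrightarrow>
          topspace X \<inter> (\<Inter>A\<in>\<A>. X closure_of {s\<in>S. f s \<in> A}) = {})"

lemma closed_family_conditionD: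
  assumes "closed_family_condition X Y S f" "\<forall>A\<in>\<A>. closedin Y A" "topspace Y \<inter> \<Inter>\<A> = {}"
  shows "topspace X \<inter> (\<Inter>A\<in>\<A>. X closure_of {s\<in>S. f s \<in> A}) = {}"
  using assms(1)[unfolded closed_family_condition_def, rule_format, of \<A>] assms(2,3) by blast

lemma in_theta_cluster_iff:
  "y \<in> theta_cluster X Y S f x \<longleftrightarrow>
     (\<forall>P. openin X P \<and> x \<in> P \<longrightarrow> y \<in> theta_closure Y (f ` (P \<inter> S)))"
  unfolding theta_cluster_def by blast

lemma X_theta_eq_theta_cluster:
  "X_theta X Y S f V = {x \<in> topspace X. theta_cluster X Y S f x \<subseteq> V}"
  unfolding X_theta_def theta_cluster_def by blast

lemma theta_closure_subset_topspace: "theta_closure Y M \<subseteq> topspace Y"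
  unfolding theta_closure_def by blast

lemma closure_of_subset_theta_closure: "Y closure_of M \<subseteq> theta_closure Y M"
proof
  fix y assume y: "y \<in> Y closure_of M"
  have "Y closure_of U \<inter> M \<noteq> {}" if "openin Y U" "y \<in> U" for U
    using y that closure_of_subset[OF openin_subset[OF \<open>openin Y U\<close>]] unfolding in_closure_of by blast
  then show "y \<in> theta_closure Y M"
    using y in_closure_of unfolding theta_closure_def by fastforce
qed

lemma theta_cluster_subset_topspace:
  "x \<in> topspace X \<Longrightarrow> theta_cluster X Y S f x \<subseteq> topspace Y"
  using theta_closure_subset_topspace by (fastforce simp: in_theta_cluster_iff)

lemma in_closure_of_open_Int_dense:
  assumes "X closure_of S = topspace X" "openin X P" "x \<in> P"
  shows "x \<in> X closure_of (P \<inter> S)"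
proof -
  have "x \<in> P \<inter> X closure_of S"
    using assms openin_subset by blast
  then show ?thesis
    using openin_Int_closure_of_subset[OF assms(2)] by blast
qed

lemma in_theta_cluster_if_in_closures:
  assumes "\<And>P. openin X P \<Longrightarrow> x \<in> P \<Longrightarrow> y \<in> Y closure_of (f ` (P \<inter> S))"
  shows "y \<in> theta_cluster X Y S f x"
  unfolding in_theta_cluster_iff
proof (intro allI impI)
  fix P assume "openin X P \<and> x \<in> P"
  then have "y \<in> Y closure_of (f ` (P \<inter> S))"
    using assms by blast
  then show "y \<in> theta_closure Y (f ` (P \<inter> S))"
    by (rule subsetD[OF closure_of_subset_theta_closure])
qed

lemma in_closure_of_preimage_closure_of_open:
  assumes "y \<in> theta_cluster X Y S f x" "x \<in> topspace X" "openin Y U" "y \<in> U"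
  shows "x \<in> X closure_of {s\<in>S. f s \<in> Y closure_of U}"
proof -
  have "\<exists>s\<in>{s\<in>S. f s \<in> Y closure_of U}. s \<in> T" if "openin X T" "x \<in> T" for T
  proof -
    have "y \<in> theta_closure Y (f ` (T \<inter> S))"
      using assms(1) that by (simp add: in_theta_cluster_iff)
    then have "Y closure_of U \<inter> f ` (T \<inter> S) \<noteq> {}"
      using assms(3,4) by (simp add: theta_closure_def)
    then show ?thesis
      by blast
  qed
  then show ?thesis
    using assms(2) by (auto simp: in_closure_of)
qed

lemma theta_cluster_subsingleton:
  assumes "Urysohn_space Y" "closed_family_condition X Y S f" "x \<in> topspace X"
    and "y1 \<in> theta_cluster X Y S f x" "y2 \<in> theta_cluster X Y S f x"
  shows "y1 = y2"
proof (rule ccontr)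
  assume "y1 \<noteq> y2"
  moreover have "y1 \<in> topspace Y" "y2 \<in> topspace Y"
    using assms(3-5) theta_cluster_subset_topspace by (meson subsetD)+
  ultimately obtain U1 U2 where U: "openin Y U1" "openin Y U2" "y1 \<in> U1" "y2 \<in> U2"
      and disj: "Y closure_of U1 \<inter> Y closure_of U2 = {}"
    using assms(1) unfolding Urysohn_space_def by meson
  have "(\<forall>A\<in>{Y closure_of U1, Y closure_of U2}. closedin Y A) \<and>
        topspace Y \<inter> \<Inter>{Y closure_of U1, Y closure_of U2} = {}"
    using disj by auto
  then have "topspace X \<inter> (\<Inter>A\<in>{Y closure_of U1, Y closure_of U2}. X closure_of {s\<in>S. f s \<in> A}) = {}"
    using closed_family_conditionD[OF assms(2)] by blast
  moreover have "x \<in> X closure_of {s\<in>S. f s \<in> Y closure_of U1}"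
    using in_closure_of_preimage_closure_of_open[OF assms(4,3) U(1,3)] .
  moreover have "x \<in> X closure_of {s\<in>S. f s \<in> Y closure_of U2}"
    using in_closure_of_preimage_closure_of_open[OF assms(5,3) U(2,4)] .
  ultimately show False
    using assms(3) by auto
qed

lemma theta_cluster_nonempty:
  assumes "closed_family_condition X Y S f" "X closure_of S = topspace X"
    and "f ` S \<subseteq> topspace Y" "x \<in> topspace X"
  shows "theta_cluster X Y S f x \<noteq> {}"
proof
  assume empty: "theta_cluster X Y S f x = {}"
  define \<A> where "\<A> = {Y closure_of (f ` (P \<inter> S)) | P. openin X P \<and> x \<in> P}"
  have "y \<in> theta_cluster X Y S f x" if "y \<in> \<Inter>\<A>" for y
    by (rule in_theta_cluster_if_in_closures) (use that in \<open>auto simp: \<A>_def\<close>)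
  with empty have "topspace Y \<inter> \<Inter>\<A> = {}"
    by blast
  moreover have "\<forall>A\<in>\<A>. closedin Y A"
    unfolding \<A>_def by auto
  ultimately have "topspace X \<inter> (\<Inter>A\<in>\<A>. X closure_of {s\<in>S. f s \<in> A}) = {}"
    using closed_family_conditionD[OF assms(1)] by blast
  moreover have "x \<in> X closure_of {s\<in>S. f s \<in> A}" if A: "A \<in> \<A>" for A
  proof -
    obtain P where P: "openin X P" "x \<in> P" "A = Y closure_of (f ` (P \<inter> S))"
      using A unfolding \<A>_def by blast
    have "f ` (P \<inter> S) \<subseteq> A"
      using P(3) closure_of_subset assms(3) by (metis image_mono inf_le2 order_trans)
    then have "X closure_of (P \<inter> S) \<subseteq> X closure_of {s\<in>S. f s \<in> A}"
      by (intro closure_of_mono) blast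
    then show ?thesis
      using in_closure_of_open_Int_dense[OF assms(2) P(1,2)] by blast
  qed
  ultimately show False
    using assms(4) by blast
qed

lemma closed_family_condition_continuous_extension:
  assumes "continuous_map X Y g" "\<forall>s\<in>S. g s = f s"
  shows "closed_family_condition X Y S f"
  unfolding closed_family_condition_def
proof (intro allI impI)
  fix \<A> assume \<A>: "(\<forall>A\<in>\<A>. closedin Y A) \<and> topspace Y \<inter> \<Inter>\<A> = {}"
  have "g x \<in> A" if "A \<in> \<A>" "x \<in> X closure_of {s\<in>S. f s \<in> A}" for x A
  proof -
    have "g x \<in> Y closure_of (g ` {s\<in>S. f s \<in> A})"
      using continuous_map_image_closure_subset[OF assms(1)] that(2) by blast
    also have "\<dots> \<subseteq> Y closure_of A"
      using assms(2) by (intro closure_of_mono) auto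
    also have "\<dots> = A"
      using \<A> that(1) by (simp add: closure_of_closedin)
    finally show ?thesis .
  qed
  moreover have "g x \<in> topspace Y" if "x \<in> topspace X" for x
    using continuous_map_image_subset_topspace[OF assms(1)] that by blast
  ultimately show "topspace X \<inter> (\<Inter>A\<in>\<A>. X closure_of {s\<in>S. f s \<in> A}) = {}"
    using \<A> by blast
qed

lemma continuous_extension_in_theta_cluster:
  assumes "continuous_map X Y g" "\<forall>s\<in>S. g s = f s" "X closure_of S = topspace X"
  shows "g x \<in> theta_cluster X Y S f x"
proof (rule in_theta_cluster_if_in_closures)
  fix P assume "openin X P" "x \<in> P"
  then have "g x \<in> g ` (X closure_of (P \<inter> S))"
    by (intro imageI in_closure_of_open_Int_dense[OF assms(3)])
  also have "\<dots> \<subseteq> Y closure_of (g ` (P \<inter> S))"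
    using continuous_map_image_closure_subset[OF assms(1)] .
  also have "g ` (P \<inter> S) = f ` (P \<inter> S)"
    using assms(2) by auto
  finally show "g x \<in> Y closure_of (f ` (P \<inter> S))" .
qed

lemma image_in_theta_cluster:
  assumes "f ` S \<subseteq> topspace Y" "s \<in> S"
  shows "f s \<in> theta_cluster X Y S f s"
proof (rule in_theta_cluster_if_in_closures)
  fix P assume "openin X P" "s \<in> P"
  then have "f s \<in> f ` (P \<inter> S)"
    using assms(2) by blast
  moreover have "f ` (P \<inter> S) \<subseteq> topspace Y"
    using assms(1) by blast
  ultimately show "f s \<in> Y closure_of (f ` (P \<inter> S))"
    using closure_of_subset by blast
qed

lemma X_theta_eq_preimage:
  assumes "\<And>x. x \<in> topspace X \<Longrightarrow> theta_cluster X Y S f x = {g x}"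
  shows "X_theta X Y S f V = {x \<in> topspace X. g x \<in> V}"
  using assms by (auto simp: X_theta_eq_theta_cluster)

lemma theta_cluster_eq_continuous_extension:
  assumes "Urysohn_space Y" "X closure_of S = topspace X"
    and "continuous_map X Y g" "\<forall>s\<in>S. g s = f s" "x \<in> topspace X"
  shows "theta_cluster X Y S f x = {g x}"
  using theta_cluster_subsingleton[OF assms(1) closed_family_condition_continuous_extension[OF assms(3,4)] assms(5)]
    continuous_extension_in_theta_cluster[OF assms(3,4,2)]
  by blast

lemma continuous_extension_exists:
  assumes "Urysohn_space Y" "S \<subseteq> topspace X" "X closure_of S = topspace X"
    and "f ` S \<subseteq> topspace Y" "closed_family_condition X Y S f"
    and "\<And>V. openin Y V \<Longrightarrow> openin X (X_theta X Y S f V)"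
  shows "\<exists>g. continuous_map X Y g \<and> (\<forall>s\<in>S. g s = f s)"
proof -
  have "\<exists>y. theta_cluster X Y S f x = {y}" if x: "x \<in> topspace X" for x
  proof -
    obtain y where y: "y \<in> theta_cluster X Y S f x"
      using theta_cluster_nonempty[OF assms(5,3,4) x] by blast
    then have "theta_cluster X Y S f x = {y}"
      using theta_cluster_subsingleton[OF assms(1,5) x _ y] by blast
    then show ?thesis ..
  qed
  then obtain g where g: "\<And>x. x \<in> topspace X \<Longrightarrow> theta_cluster X Y S f x = {g x}"
    by metis
  have "\<forall>s\<in>S. g s = f s"
    using g assms(2) image_in_theta_cluster[OF assms(4)] by (metis singletonD subsetD)
  moreover have "g \<in> topspace X \<rightarrow> topspace Y"
  proof
    fix x assume x: "x \<in> topspace X"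
    have "g x \<in> theta_cluster X Y S f x"
      using g[OF x] by simp
    then show "g x \<in> topspace Y"
      by (rule subsetD[OF theta_cluster_subset_topspace[OF x]])
  qed
  moreover have "openin X {x \<in> topspace X. g x \<in> V}" if "openin Y V" for V
    using assms(6)[OF that] by (simp only: X_theta_eq_preimage[OF g])
  ultimately show ?thesis
    unfolding continuous_map_def by blast
qed

theorem corollary3p4:
  fixes X :: "'a topology" and Y :: "'b topology"
    and S :: "'a set" and f :: "'a \<Rightarrow> 'b"
  assumes "Urysohn_space Y"
    and "S \<subseteq> topspace X" and "X closure_of S = topspace X"
    and "continuous_map (subtopology X S) Y f"
  shows "(\<exists>g. continuous_map X Y g \<and> (\<forall>x\<in>S. g x = f x)) \<longleftrightarrow>
         ((\<forall>V. openin Y V \<longrightarrow> openin X (X_theta X Y S f V)) \<and>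
          (\<forall>\<A>. (\<forall>A\<in>\<A>. closedin Y A) \<and> topspace Y \<inter> \<Inter>\<A> = {} \<longrightarrow>
                topspace X \<inter> (\<Inter>A\<in>\<A>. X closure_of {s\<in>S. f s \<in> A}) = {}))"
  unfolding closed_family_condition_def[symmetric]
proof
  assume "\<exists>g. continuous_map X Y g \<and> (\<forall>x\<in>S. g x = f x)"
  then obtain g where g: "continuous_map X Y g" "\<forall>s\<in>S. g s = f s"
    by blast
  have "X_theta X Y S f V = {x \<in> topspace X. g x \<in> V}" for V
    using X_theta_eq_preimage[OF theta_cluster_eq_continuous_extension[OF assms(1,3) g]] .
  then have "openin X (X_theta X Y S f V)" if "openin Y V" for V
    using openin_continuous_map_preimage[OF g(1) that] by simp
  then show "(\<forall>V. openin Y V \<longrightarrow> openin X (X_theta X Y S f V)) \<and> closed_family_condition X Y S f"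
    using closed_family_condition_continuous_extension[OF g] by blast
next
  assume conditions: "(\<forall>V. openin Y V \<longrightarrow> openin X (X_theta X Y S f V)) \<and> closed_family_condition X Y S f"
  have "f ` S \<subseteq> topspace Y"
    using continuous_map_image_subset_topspace[OF assms(4)] assms(2) by (simp add: inf_absorb2)
  with conditions show "\<exists>g. continuous_map X Y g \<and> (\<forall>x\<in>S. g x = f x)"
    using continuous_extension_exists[OF assms(1-3)] by simp
qed

end
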